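(* Let $f$ be a $T$-norm with an additive generator $\mu$ such that for all $0\leq x\leq y\leq 1$ and all $h\geq 0$ with $y+h\leq 1$, $\mu(x)-\mu(x+h)\geq \mu(y)-\mu(y+h)$. Then $f$ satisfies property $A$.
   Context: A $T$-norm is a function $f:[0,1]^2\to[0,1]$ that is commutative, associative, monotonic ($x\leq y$ implies $f(x,z)\leq f(y,z)$) and satisfies $f(x,1)=x$. An additive generator of $f$ is a strictly decreasing function $\mu:[0,1]\to[0,\infty]$, right-continuous at $0$, with $\mu(1)=0$, such that for all $x,y\in[0,1]$, $\mu(x)+\mu(y)\in \mathrm{Range}(\mu)\cup[\mu(0),\infty]$ and $f(x,y)=\mu^{(-1)}(\mu(x)+\mu(y))$, where $\mu^{(-1)}:[0,\infty]\to[0,1]$ is the pseudo-inverse $\mu^{(-1)}(t)=\sup\{x\in[0,1]:\mu(x)>t\}$ (with $\sup\emptyset=0$). A function $f:[0,1]^2\to[0,1]$ satisfies property $A$ if for all $0\leq x\leq y\leq z\leq w\leq 1$, $w+x\leq y+z$ implies $f(x,w)\leq f(y,z)$. *)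

theory Defs
  imports "HOL-Analysis.Analysis" "HOL-Library.Extended_Nonnegative_Real"
begin

text \<open>T-norms on [0,1]; functions are total on real but only their values on [0,1] matter.\<close>
definition is_tnorm :: "(real \<Rightarrow> real \<Rightarrow> real) \<Rightarrow> bool" where
  "is_tnorm f \<longleftrightarrow>
     (\<forall>x\<in>{0..1}. \<forall>y\<in>{0..1}. f x y \<in> {0..1}) \<and>
     (\<forall>x\<in>{0..1}. \<forall>y\<in>{0..1}. f x y = f y x) \<and>
     (\<forall>x\<in>{0..1}. \<forall>y\<in>{0..1}. \<forall>z\<in>{0..1}. f x (f y z) = f (f x y) z) \<and>
     (\<forall>x\<in>{0..1}. \<forall>y\<in>{0..1}. \<forall>z\<in>{0..1}. x \<le> y \<longrightarrow> f x z \<le> f y z) \<and>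
     (\<forall>x\<in>{0..1}. f x 1 = x)"

definition pseudo_inv :: "(real \<Rightarrow> ennreal) \<Rightarrow> ennreal \<Rightarrow> real" where
  "pseudo_inv \<mu> t = (if {x\<in>{0..1}. \<mu> x > t} = {} then 0 else Sup {x\<in>{0..1}. \<mu> x > t})"

definition is_additive_generator :: "(real \<Rightarrow> ennreal) \<Rightarrow> (real \<Rightarrow> real \<Rightarrow> real) \<Rightarrow> bool" where
  "is_additive_generator \<mu> f \<longleftrightarrow>
     (\<forall>x\<in>{0..1}. \<forall>y\<in>{0..1}. x < y \<longrightarrow> \<mu> y < \<mu> x) \<and>
     (\<mu> \<longlongrightarrow> \<mu> 0) (at_right 0) \<and>
     \<mu> 1 = 0 \<and>
     (\<forall>x\<in>{0..1}. \<forall>y\<in>{0..1}. \<mu> x + \<mu> y \<in> \<mu> ` {0..1} \<union> {\<mu> 0..}) \<and>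
     (\<forall>x\<in>{0..1}. \<forall>y\<in>{0..1}. f x y = pseudo_inv \<mu> (\<mu> x + \<mu> y))"

definition property_A :: "(real \<Rightarrow> real \<Rightarrow> real) \<Rightarrow> bool" where
  "property_A f \<longleftrightarrow>
     (\<forall>x y z w. 0 \<le> x \<and> x \<le> y \<and> y \<le> z \<and> z \<le> w \<and> w \<le> 1 \<and> w + x \<le> y + z
        \<longrightarrow> f x w \<le> f y z)"

end

theory Submission
  imports Defs
begin

text \<open>
  Since \<mu> is decreasing, the generated T-norm is antitone in \<open>\<mu> x + \<mu> y\<close>, so it
  suffices to show \<open>\<mu> y + \<mu> z \<le> \<mu> x + \<mu> w\<close>. With \<open>h = w - y\<close> we have \<open>x + h \<le> z\<close>, hence
  \<open>\<mu> z \<le> \<mu> (x + h)\<close>, and the hypothesis on the increments of \<mu> gives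
  \<open>\<mu> y + \<mu> (x + h) \<le> \<mu> x + \<mu> (y + h) = \<mu> x + \<mu> w\<close>.
\<close>

lemma pseudo_inv_eq_Sup_insert:
  "pseudo_inv \<mu> t = Sup (insert 0 {x\<in>{0..1}. \<mu> x > t})"
proof -
  let ?S = "{x\<in>{0..1}. \<mu> x > t}"
  have bdd: "bdd_above ?S" by (rule bdd_aboveI[of _ 1]) auto
  have "0 \<le> Sup ?S" if "a \<in> ?S" for a
    using cSup_upper[OF that bdd] that by simp
  then show ?thesis
    unfolding pseudo_inv_def using bdd by (auto simp add: cSup_insert_If sup.absorb2)
qed

lemma pseudo_inv_antimono:
  assumes "s \<le> t"
  shows "pseudo_inv \<mu> t \<le> pseudo_inv \<mu> s"
proof -
  have "insert 0 {x\<in>{0..1}. \<mu> x > t} \<subseteq> insert 0 {x\<in>{0..1}. \<mu> x > s}"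
    using assms by (auto intro: le_less_trans)
  moreover have "bdd_above (insert 0 {x\<in>{0..1}. \<mu> x > s})"
    by (rule bdd_aboveI[of _ 1]) auto
  ultimately show ?thesis
    unfolding pseudo_inv_eq_Sup_insert by (intro cSup_subset_mono) auto
qed

lemma additive_generator_antimono:
  assumes "is_additive_generator \<mu> f" "0 \<le> a" "a \<le> b" "b \<le> 1"
  shows "\<mu> b \<le> \<mu> a"
proof (cases "a = b")
  case False
  with assms show ?thesis
    unfolding is_additive_generator_def by (simp add: less_imp_le)
qed simp

lemma additive_generator_le_if_sum_le:
  assumes "is_additive_generator \<mu> f"
    and "x \<in> {0..1}" "y \<in> {0..1}" "u \<in> {0..1}" "v \<in> {0..1}"
    and "\<mu> u + \<mu> v \<le> \<mu> x + \<mu> y"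
  shows "f x y \<le> f u v"
proof -
  have "f x y = pseudo_inv \<mu> (\<mu> x + \<mu> y)" "f u v = pseudo_inv \<mu> (\<mu> u + \<mu> v)"
    using assms(1-5) unfolding is_additive_generator_def by blast+
  then show ?thesis
    using pseudo_inv_antimono[OF assms(6)] by simp
qed

lemma sum_le_sum_if_decreasing_increments:
  fixes \<mu> :: "real \<Rightarrow> 'a::ordered_ab_semigroup_add"
  assumes antimono: "\<And>a b. 0 \<le> a \<Longrightarrow> a \<le> b \<Longrightarrow> b \<le> 1 \<Longrightarrow> \<mu> b \<le> \<mu> a"
    and increments: "\<And>x y h. 0 \<le> x \<Longrightarrow> x \<le> y \<Longrightarrow> y \<le> 1 \<Longrightarrow> 0 \<le> h \<Longrightarrow> y + h \<le> 1 \<Longrightarrow>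
           \<mu> y + \<mu> (x + h) \<le> \<mu> x + \<mu> (y + h)"
    and "0 \<le> x" "x \<le> y" "y \<le> z" "z \<le> w" "w \<le> 1" "w + x \<le> y + z"
  shows "\<mu> y + \<mu> z \<le> \<mu> x + \<mu> w"
proof -
  have "\<mu> y + \<mu> z \<le> \<mu> y + \<mu> (x + (w - y))"
    using assms(3-) by (intro add_left_mono antimono) auto
  also have "\<dots> \<le> \<mu> x + \<mu> (y + (w - y))"
    using assms(3-) by (intro increments) auto
  finally show ?thesis by simp
qed

theorem theorem5:
  fixes f :: "real \<Rightarrow> real \<Rightarrow> real" and \<mu> :: "real \<Rightarrow> ennreal"
  assumes "is_tnorm f"
    and "is_additive_generator \<mu> f"
    and "\<And>x y h. 0 \<le> x \<Longrightarrow> x \<le> y \<Longrightarrow> y \<le> 1 \<Longrightarrow> 0 \<le> h \<Longrightarrow> y + h \<le> 1 \<Longrightarrow>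
           \<mu> y + \<mu> (x + h) \<le> \<mu> x + \<mu> (y + h)"
  shows "property_A f"
  unfolding property_A_def
proof (intro allI impI)
  fix x y z w :: real
  assume order: "0 \<le> x \<and> x \<le> y \<and> y \<le> z \<and> z \<le> w \<and> w \<le> 1 \<and> w + x \<le> y + z"
  have "\<mu> y + \<mu> z \<le> \<mu> x + \<mu> w"
    using order additive_generator_antimono[OF assms(2)]
    by (intro sum_le_sum_if_decreasing_increments[OF _ assms(3)]) auto
  with assms(2) order show "f x w \<le> f y z"
    by (intro additive_generator_le_if_sum_le) auto
qed

end
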